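(* Let $D\ge1$ and let $\mathcal{F}$ be a collection of pairwise non-overlapping $D$-simplices on $\gamma_D$ whose vertex sets have union exactly a set of $n$ points, and suppose $\mathcal{F}$ is non-extendable. Then there is a collection $\mathcal{F}'$ of pairwise non-overlapping $(D+1)$-simplices on $\gamma_{D+1}$ whose vertex sets have union a set of exactly $n+1$ points of $\gamma_{D+1}$, such that $\mathcal{F}'$ is non-extendable.
   Context: $\gamma_D=\{(t,t^2,\dots,t^D):t\in\mathbb{R}\}$. A $D$-simplex on $\gamma_D$ is $\mathrm{conv}(\sigma)$ for $\sigma\subseteq\gamma_D$, $|\sigma|=D+1$. Simplices overlap if $\mathrm{conv}(\sigma)\cap\mathrm{conv}(\tau)\supsetneq\mathrm{conv}(\sigma\cap\tau)$. A collection of simplices on $\gamma_D$ whose vertex sets have union $A$ is non-extendable if there is no triangulation of $\mathrm{conv}(A)$ all of whose vertices lie in $A$ and which contains every simplex of the collection. *)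

theory Defs
  imports "HOL-Analysis.Analysis"
begin

text \<open>Points of R^D are modelled as functions nat => real whose coordinates
  1..D are meaningful (all others are 0). A point of the moment curve gamma_D
  is identified with its parameter t.\<close>

definition moment :: "nat \<Rightarrow> real \<Rightarrow> (nat \<Rightarrow> real)" where
  "moment D t = (\<lambda>i. if 1 \<le> i \<and> i \<le> D then t ^ i else 0)"

definition conv_mc :: "nat \<Rightarrow> real set \<Rightarrow> (nat \<Rightarrow> real) set" where
  "conv_mc D P = {(\<lambda>i. \<Sum>t\<in>P. u t * moment D t i) | u.
      (\<forall>t\<in>P. 0 \<le> u t) \<and> (\<Sum>t\<in>P. u t) = 1}"

definition is_simplex :: "nat \<Rightarrow> real set \<Rightarrow> bool" where
  "is_simplex D \<sigma> \<longleftrightarrow> finite \<sigma> \<and> card \<sigma> = D + 1"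

definition overlap :: "nat \<Rightarrow> real set \<Rightarrow> real set \<Rightarrow> bool" where
  "overlap D \<sigma> \<tau> \<longleftrightarrow> conv_mc D (\<sigma> \<inter> \<tau>) \<subset> conv_mc D \<sigma> \<inter> conv_mc D \<tau>"

definition pairwise_nonoverlapping :: "nat \<Rightarrow> real set set \<Rightarrow> bool" where
  "pairwise_nonoverlapping D F \<longleftrightarrow>
     (\<forall>\<sigma>\<in>F. \<forall>\<tau>\<in>F. \<sigma> \<noteq> \<tau> \<longrightarrow> \<not> overlap D \<sigma> \<tau>)"

definition triangulation :: "nat \<Rightarrow> real set \<Rightarrow> real set set \<Rightarrow> bool" where
  "triangulation D A T \<longleftrightarrow> finite T \<and> (\<forall>\<sigma>\<in>T. is_simplex D \<sigma> \<and> \<sigma> \<subseteq> A)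
     \<and> pairwise_nonoverlapping D T \<and> (\<Union>\<sigma>\<in>T. conv_mc D \<sigma>) = conv_mc D A"

definition non_extendable :: "nat \<Rightarrow> real set set \<Rightarrow> bool" where
  "non_extendable D F \<longleftrightarrow> \<not> (\<exists>T. triangulation D (\<Union>F) T \<and> F \<subseteq> T)"

end

theory Submission imports Defs "HOL-Computational_Algebra.Polynomial" begin

text \<open>Choose the new vertex s larger than every parameter in \<open>\<Union>F\<close> and take the
  cones \<open>F' = insert s ` F\<close>. The key tool is the central projection from the curve
  point with parameter s: for small \<open>e > 0\<close> it maps the slice \<open>y\<^sub>1 = s - e\<close> of
  \<open>conv(insert s P)\<close> bijectively onto \<open>conv(P)\<close> one dimension down. Hence the cones
  over two non-overlapping simplices do not overlap (this uses that \<open>D + 1\<close> points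
  of the moment curve are affinely independent, a Vandermonde argument), and
  conversely the cells containing s of a triangulation containing \<open>F'\<close> project to a
  triangulation of \<open>conv(\<Union>F)\<close> containing F.\<close>

lemma conv_mc_if_weights_vanish:
  assumes "finite P" "Q \<subseteq> P" "\<forall>t\<in>P. 0 \<le> c t" "(\<Sum>t\<in>P. c t) = 1" "\<forall>t\<in>P - Q. c t = 0"
  shows "(\<lambda>i. \<Sum>t\<in>P. c t * moment D t i) \<in> conv_mc D Q"
proof -
  have restrict: "(\<Sum>t\<in>P. c t * g t) = (\<Sum>t\<in>Q. c t * g t)" for g :: "real \<Rightarrow> real"
    using assms(1,2,5) by (intro sum.mono_neutral_right) auto
  have "(\<Sum>t\<in>Q. c t) = 1"
    using restrict[of "\<lambda>_. 1"] assms(4) by simp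
  then show ?thesis
    using assms(2,3) unfolding conv_mc_def restrict by auto
qed

lemma conv_mc_mono:
  assumes "finite Q" "P \<subseteq> Q"
  shows "conv_mc D P \<subseteq> conv_mc D Q"
proof
  fix x assume "x \<in> conv_mc D P"
  then obtain u where x: "x = (\<lambda>i. \<Sum>t\<in>P. u t * moment D t i)"
    and u: "\<forall>t\<in>P. 0 \<le> u t" "(\<Sum>t\<in>P. u t) = 1"
    by (auto simp: conv_mc_def)
  define v where "v t = (if t \<in> P then u t else 0)" for t
  have extend: "(\<Sum>t\<in>Q. v t * g t) = (\<Sum>t\<in>P. u t * g t)" for g :: "real \<Rightarrow> real"
  proof -
    have "(\<Sum>t\<in>Q. v t * g t) = (\<Sum>t\<in>P. v t * g t)"
      using assms by (intro sum.mono_neutral_right) (auto simp: v_def)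
    then show ?thesis
      by (simp add: v_def)
  qed
  have "(\<Sum>t\<in>Q. v t) = 1"
    using extend[of "\<lambda>_. 1"] u by simp
  then show "x \<in> conv_mc D Q"
    using u unfolding conv_mc_def x extend[symmetric] by (auto simp: v_def)
qed

lemma not_overlap_iff_inter_subset:
  assumes "finite \<sigma>" "finite \<tau>"
  shows "\<not> overlap D \<sigma> \<tau> \<longleftrightarrow> conv_mc D \<sigma> \<inter> conv_mc D \<tau> \<subseteq> conv_mc D (\<sigma> \<inter> \<tau>)"
  using conv_mc_mono[of \<sigma> "\<sigma> \<inter> \<tau>" D] conv_mc_mono[of \<tau> "\<sigma> \<inter> \<tau>" D] assms
  unfolding overlap_def by auto

lemma not_overlap_insert_iff:
  assumes "finite \<sigma>" "finite \<tau>"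
  shows "\<not> overlap D (insert s \<sigma>) (insert s \<tau>)
    \<longleftrightarrow> conv_mc D (insert s \<sigma>) \<inter> conv_mc D (insert s \<tau>) \<subseteq> conv_mc D (insert s (\<sigma> \<inter> \<tau>))"
proof -
  have "insert s \<sigma> \<inter> insert s \<tau> = insert s (\<sigma> \<inter> \<tau>)"
    by auto
  then show ?thesis
    using not_overlap_iff_inter_subset[of "insert s \<sigma>" "insert s \<tau>" D] assms by simp
qed

lemma conv_mc_support:
  assumes "y \<in> conv_mc D P" "i = 0 \<or> D < i"
  shows "y i = 0"
  using assms by (auto simp: conv_mc_def moment_def)

lemma moment_Suc_first [simp]: "moment (Suc D) t (Suc 0) = t"
  by (simp add: moment_def)

lemma conv_mc_first_coord_less:
  assumes "y \<in> conv_mc (Suc D) P" "\<forall>t\<in>P. t < b"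
  shows "y 1 < b"
proof -
  obtain c where y: "y = (\<lambda>i. \<Sum>t\<in>P. c t * moment (Suc D) t i)"
    and c: "\<forall>t\<in>P. 0 \<le> c t" "(\<Sum>t\<in>P. c t) = 1"
    using assms(1) by (auto simp: conv_mc_def)
  have P: "finite P" "P \<noteq> {}"
    using c(2) by (auto intro: ccontr)
  have "y 1 = (\<Sum>t\<in>P. c t * t)"
    using y by simp
  also have "\<dots> \<le> (\<Sum>t\<in>P. c t * Max P)"
    using c P by (intro sum_mono mult_left_mono) auto
  also have "\<dots> = Max P"
    using c by (simp add: sum_distrib_right[symmetric])
  also have "Max P < b"
    using P assms(2) by simp
  finally show ?thesis .
qed

lemma weighted_sum_diff_eq:
  fixes c :: "real \<Rightarrow> real"
  assumes "(\<Sum>t\<in>P. c t) = 1"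
  shows "(\<Sum>t\<in>P. c t * (s - t)) = s - (\<Sum>t\<in>P. c t * t)"
proof -
  have "(\<Sum>t\<in>P. c t * (s - t)) = (\<Sum>t\<in>P. c t) * s - (\<Sum>t\<in>P. c t * t)"
    by (simp add: right_diff_distrib sum_subtractf sum_distrib_right)
  then show ?thesis
    using assms by simp
qed

text \<open>Central projection from \<open>moment (Suc D) s\<close>, rescaled by \<open>1/e\<close>: since
  \<open>s * t^k - t^(k+1) = (s - t) * t^k\<close>, it maps \<open>moment (Suc D) t\<close> to
  \<open>(s - t)/e * moment D t\<close>.\<close>
definition slice_proj :: "nat \<Rightarrow> real \<Rightarrow> real \<Rightarrow> (nat \<Rightarrow> real) \<Rightarrow> (nat \<Rightarrow> real)" where
  "slice_proj D s e y = (\<lambda>k. if 1 \<le> k \<and> k \<le> D then (s * y k - y (Suc k)) / e else 0)"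

lemma slice_proj_sum:
  "slice_proj D s e (\<lambda>i. \<Sum>t\<in>P. c t * moment (Suc D) t i)
     = (\<lambda>k. \<Sum>t\<in>P. (c t * (s - t) / e) * moment D t k)"
proof
  fix k
  show "slice_proj D s e (\<lambda>i. \<Sum>t\<in>P. c t * moment (Suc D) t i) k
      = (\<Sum>t\<in>P. (c t * (s - t) / e) * moment D t k)"
  proof (cases "1 \<le> k \<and> k \<le> D")
    case True
    then have "slice_proj D s e (\<lambda>i. \<Sum>t\<in>P. c t * moment (Suc D) t i) k
        = (s * (\<Sum>t\<in>P. c t * t ^ k) - (\<Sum>t\<in>P. c t * t ^ Suc k)) / e"
      by (simp add: slice_proj_def moment_def)
    also have "\<dots> = (\<Sum>t\<in>P. (c t * (s - t) / e) * t ^ k)"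
      by (simp add: sum_distrib_left sum_subtractf[symmetric] sum_divide_distrib algebra_simps)
    finally show ?thesis
      using True by (simp add: moment_def)
  qed (auto simp: slice_proj_def moment_def)
qed

lemma slice_proj_mem_conv_mc:
  assumes "finite P" "\<forall>t\<in>P. t \<le> s" "0 < e"
    and "y \<in> conv_mc (Suc D) (insert s P)" "y 1 = s - e"
  shows "slice_proj D s e y \<in> conv_mc D (P - {s})"
proof -
  obtain c where y: "y = (\<lambda>i. \<Sum>t\<in>insert s P. c t * moment (Suc D) t i)"
    and c: "\<forall>t\<in>insert s P. 0 \<le> c t" "(\<Sum>t\<in>insert s P. c t) = 1"
    using assms(4) by (auto simp: conv_mc_def)
  define l where "l t = c t * (s - t) / e" for t
  have drop_apex: "(\<Sum>t\<in>insert s P. l t * g t) = (\<Sum>t\<in>P - {s}. l t * g t)" for g :: "real \<Rightarrow> real"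
    using assms(1) by (simp add: l_def sum.insert_remove)
  have "slice_proj D s e y = (\<lambda>k. \<Sum>t\<in>insert s P. l t * moment D t k)"
    unfolding y slice_proj_sum l_def ..
  then have proj: "slice_proj D s e y = (\<lambda>k. \<Sum>t\<in>P - {s}. l t * moment D t k)"
    by (simp add: drop_apex)
  have "(\<Sum>t\<in>insert s P. c t * (s - t)) = e"
    using weighted_sum_diff_eq[OF c(2), of s] assms(5) y by simp
  then have "(\<Sum>t\<in>P - {s}. l t) = 1"
    using drop_apex[of "\<lambda>_. 1"] assms(3) by (simp add: l_def sum_divide_distrib[symmetric])
  moreover have "\<forall>t\<in>P - {s}. 0 \<le> l t"
    using c assms(2,3) by (auto simp: l_def)
  ultimately show ?thesis
    unfolding proj by (auto simp: conv_mc_def)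
qed

lemma slice_proj_lift:
  assumes "finite P" "0 < e" "\<forall>t\<in>P. e \<le> s - t" "x \<in> conv_mc D P"
  obtains y where "y \<in> conv_mc (Suc D) (insert s P)" "y 1 = s - e" "slice_proj D s e y = x"
proof -
  obtain u where x: "x = (\<lambda>i. \<Sum>t\<in>P. u t * moment D t i)"
    and u: "\<forall>t\<in>P. 0 \<le> u t" "(\<Sum>t\<in>P. u t) = 1"
    using assms(4) by (auto simp: conv_mc_def)
  have dist: "t \<in> P \<Longrightarrow> 0 < s - t" for t
    using assms(2,3) by fastforce
  have "s \<notin> P"
    using dist by fastforce
  define a where "a t = e * u t / (s - t)" for t
  define c where "c t = (if t = s then 1 - (\<Sum>t\<in>P. a t) else a t)" for t
  define y where "y = (\<lambda>i. \<Sum>t\<in>insert s P. c t * moment (Suc D) t i)"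
  have a_nonneg: "t \<in> P \<Longrightarrow> 0 \<le> a t" for t
    using u dist[of t] assms(2) by (simp add: a_def)
  have a_le: "t \<in> P \<Longrightarrow> a t \<le> u t" for t
    using u dist[of t] assms(3) mult_right_mono[of e "s - t" "u t"]
    by (simp add: a_def divide_le_eq mult.commute)
  have a_dist: "t \<in> P \<Longrightarrow> a t * (s - t) = e * u t" for t
    using dist[of t] by (simp add: a_def)
  have "(\<Sum>t\<in>P. a t) \<le> 1"
    using sum_mono[of P a u] a_le u by simp
  then have c_nonneg: "\<forall>t\<in>insert s P. 0 \<le> c t"
    using a_nonneg \<open>s \<notin> P\<close> by (auto simp: c_def)
  have c_sum: "(\<Sum>t\<in>insert s P. c t * g t) = c s * g s + (\<Sum>t\<in>P. a t * g t)" for g :: "real \<Rightarrow> real"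
    using assms(1) \<open>s \<notin> P\<close> by (auto simp: c_def intro: sum.cong)
  have c_one: "(\<Sum>t\<in>insert s P. c t) = 1"
    using c_sum[of "\<lambda>_. 1"] by (simp add: c_def)
  have "(\<Sum>t\<in>insert s P. c t * (s - t)) = e"
    using c_sum[of "\<lambda>t. s - t"] a_dist u by (simp add: sum_distrib_left[symmetric])
  then have "y 1 = s - e"
    using weighted_sum_diff_eq[OF c_one, of s] by (simp add: y_def)
  moreover have "slice_proj D s e y k = x k" for k
  proof -
    have "slice_proj D s e y k = (\<Sum>t\<in>insert s P. c t * ((s - t) / e * moment D t k))"
      unfolding y_def slice_proj_sum by (simp add: ac_simps)
    also have "\<dots> = (\<Sum>t\<in>P. a t * (s - t) / e * moment D t k)"
      unfolding c_sum by (simp add: ac_simps)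
    also have "\<dots> = x k"
      unfolding x using a_dist assms(2) by (auto intro: sum.cong)
    finally show ?thesis .
  qed
  moreover have "y \<in> conv_mc (Suc D) (insert s P)"
    using c_nonneg c_one by (auto simp: conv_mc_def y_def)
  ultimately show ?thesis
    using that by blast
qed

lemma slice_proj_eq_imp_eq:
  assumes "y \<in> conv_mc (Suc D) P" "y' \<in> conv_mc (Suc D) Q" "e \<noteq> 0"
    and "y 1 = y' 1" "slice_proj D s e y = slice_proj D s e y'"
  shows "y = y'"
proof
  fix k
  have "y k = y' k" if "1 \<le> k" "k \<le> Suc D" for k
    using that
  proof (induction k rule: dec_induct)
    case base
    then show ?case using assms(4) by simp
  next
    case (step k)
    then have "slice_proj D s e y k = slice_proj D s e y' k"
      using assms(5) by simp
    then show ?case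
      using step assms(3) by (simp add: slice_proj_def)
  qed
  then show "y k = y' k"
    using conv_mc_support[OF assms(1)] conv_mc_support[OF assms(2)]
    by (cases "1 \<le> k \<and> k \<le> Suc D") auto
qed

lemma power_sums_zero_imp_zero:
  fixes w :: "real \<Rightarrow> real"
  assumes "finite P" "card P \<le> Suc K" "\<forall>k\<le>K. (\<Sum>t\<in>P. w t * t ^ k) = 0" "t0 \<in> P"
  shows "w t0 = 0"
proof -
  define p where "p = (\<Prod>t\<in>P - {t0}. [:-t, 1:])"
  have "degree p \<le> card (P - {t0})"
    unfolding p_def using degree_prod_sum_le[of "P - {t0}" "\<lambda>t. [:-t, 1:]"] assms(1)
    by (simp add: o_def)
  then have deg: "degree p \<le> K"
    using assms(1,2,4) by simp
  have "(\<Sum>t\<in>P. w t * poly p t) = (\<Sum>t\<in>P. \<Sum>i\<le>degree p. coeff p i * (w t * t ^ i))"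
    by (simp add: poly_altdef sum_distrib_left mult_ac)
  also have "\<dots> = (\<Sum>i\<le>degree p. coeff p i * (\<Sum>t\<in>P. w t * t ^ i))"
    by (subst sum.swap) (simp add: sum_distrib_left)
  also have "\<dots> = 0"
    using assms(3) deg by simp
  finally have "(\<Sum>t\<in>P. w t * poly p t) = 0" .
  moreover have "poly p t = 0" if "t \<in> P - {t0}" for t
    using assms(1) that by (auto simp: p_def poly_prod)
  ultimately have "w t0 * poly p t0 = 0"
    using assms(1,4) by (simp add: sum.remove)
  moreover have "poly p t0 \<noteq> 0"
    using assms(1) by (auto simp: p_def poly_prod)
  ultimately show ?thesis
    by simp
qed

lemma barycentric_coords_vanish_outside:
  assumes "finite \<sigma>" "card \<sigma> \<le> Suc D" "Q \<subseteq> \<sigma>" "(\<Sum>t\<in>\<sigma>. l t) = 1"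
    and "(\<lambda>k. \<Sum>t\<in>\<sigma>. l t * moment D t k) \<in> conv_mc D Q"
  shows "\<forall>t\<in>\<sigma> - Q. l t = 0"
proof
  obtain u where u: "(\<lambda>k. \<Sum>t\<in>\<sigma>. l t * moment D t k) = (\<lambda>k. \<Sum>t\<in>Q. u t * moment D t k)"
    "(\<Sum>t\<in>Q. u t) = 1"
    using assms(5) by (auto simp: conv_mc_def)
  define w where "w t = l t - (if t \<in> Q then u t else 0)" for t
  have w_sum: "(\<Sum>t\<in>\<sigma>. w t * g t) = (\<Sum>t\<in>\<sigma>. l t * g t) - (\<Sum>t\<in>Q. u t * g t)"
    for g :: "real \<Rightarrow> real"
  proof -
    have "(\<Sum>t\<in>\<sigma>. (if t \<in> Q then u t else 0) * g t) = (\<Sum>t\<in>\<sigma> \<inter> Q. u t * g t)"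
      using assms(1) by (auto simp: sum.inter_restrict intro: sum.cong)
    then show ?thesis
      using assms(3) by (simp add: w_def left_diff_distrib sum_subtractf Int_absorb1)
  qed
  have "(\<Sum>t\<in>\<sigma>. w t * t ^ k) = 0" if "k \<le> D" for k
  proof (cases "k = 0")
    case True
    then show ?thesis
      using w_sum[of "\<lambda>_. 1"] assms(4) u(2) by simp
  next
    case False
    then show ?thesis
      using w_sum[of "\<lambda>t. t ^ k"] fun_cong[OF u(1), of k] that by (simp add: moment_def)
  qed
  then have "w t = 0" if "t \<in> \<sigma>" for t
    using power_sums_zero_imp_zero[OF assms(1,2)] that by blast
  then show "l t = 0" if "t \<in> \<sigma> - Q" for t
    using that by (simp add: w_def)
qed

lemma pairwise_nonoverlappingD:
  "pairwise_nonoverlapping D F \<Longrightarrow> \<sigma> \<in> F \<Longrightarrow> \<tau> \<in> F \<Longrightarrow> \<sigma> \<noteq> \<tau> \<Longrightarrow> \<not> overlap D \<sigma> \<tau>"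
  by (simp add: pairwise_nonoverlapping_def)

lemma exists_gap_below:
  fixes s :: real
  assumes "finite P" "\<forall>t\<in>P. t < s"
  obtains e where "0 < e" "\<forall>t\<in>P. e < s - t"
proof (cases "P = {}")
  case True
  then show ?thesis
    using that[of 1] by simp
next
  case False
  then have "Max P < s" "\<forall>t\<in>P. t \<le> Max P"
    using assms by simp_all
  then show ?thesis
    using that[of "(s - Max P) / 2"] by fastforce
qed

lemma cone_coords_vanish_outside:
  assumes "finite \<sigma>1" "finite \<sigma>2" "card \<sigma>1 \<le> Suc D" "\<forall>t\<in>\<sigma>1 \<union> \<sigma>2. t < s"
    and base: "conv_mc D \<sigma>1 \<inter> conv_mc D \<sigma>2 \<subseteq> conv_mc D (\<sigma>1 \<inter> \<sigma>2)"
    and c: "\<forall>t\<in>insert s \<sigma>1. 0 \<le> c t" "(\<Sum>t\<in>insert s \<sigma>1. c t) = 1"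
    and y: "y = (\<lambda>i. \<Sum>t\<in>insert s \<sigma>1. c t * moment (Suc D) t i)"
      "y \<in> conv_mc (Suc D) (insert s \<sigma>2)"
  shows "\<forall>t\<in>\<sigma>1 - \<sigma>2. c t = 0"
proof
  fix t assume t: "t \<in> \<sigma>1 - \<sigma>2"
  have s_notin: "s \<notin> \<sigma>1" "s \<notin> \<sigma>2"
    using assms(4) by auto
  define d where "d = s - y 1"
  have d_eq: "(\<Sum>t\<in>insert s \<sigma>1. c t * (s - t)) = d"
    using weighted_sum_diff_eq[OF c(2), of s] y(1) by (simp add: d_def)
  have "0 \<le> s - t" if "t \<in> insert s \<sigma>1" for t
    using assms(4) that by (auto intro: less_imp_le)
  then have nonneg: "\<forall>t\<in>insert s \<sigma>1. 0 \<le> c t * (s - t)"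
    using c(1) by simp
  show "c t = 0"
  proof (cases "d = 0")
    case True
    then have "c t * (s - t) = 0"
      using sum_nonneg_eq_0_iff[of "insert s \<sigma>1" "\<lambda>t. c t * (s - t)"] d_eq nonneg t assms(1)
      by auto
    then show ?thesis
      using assms(4) t by auto
  next
    case False
    have "0 \<le> d"
      unfolding d_eq[symmetric] using nonneg by (intro sum_nonneg) blast
    with False have "0 < d"
      by simp
    define l where "l t = c t * (s - t) / d" for t
    have below: "\<forall>t\<in>\<sigma>1. t \<le> s" "\<forall>t\<in>\<sigma>2. t \<le> s"
      using assms(4) by (auto intro: less_imp_le)
    have "y \<in> conv_mc (Suc D) (insert s \<sigma>1)"
      using c y(1) by (auto simp: conv_mc_def)
    moreover have "y 1 = s - d"
      by (simp add: d_def)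
    ultimately have "slice_proj D s d y \<in> conv_mc D (\<sigma>1 - {s})" "slice_proj D s d y \<in> conv_mc D (\<sigma>2 - {s})"
      using slice_proj_mem_conv_mc[OF assms(1) below(1) \<open>0 < d\<close>]
        slice_proj_mem_conv_mc[OF assms(2) below(2) \<open>0 < d\<close>] y by blast+
    then have "slice_proj D s d y \<in> conv_mc D (\<sigma>1 \<inter> \<sigma>2)"
      using base s_notin by auto
    moreover have "slice_proj D s d y = (\<lambda>k. \<Sum>t\<in>\<sigma>1. l t * moment D t k)"
      unfolding y(1) slice_proj_sum l_def using assms(1) s_notin by simp
    moreover have "(\<Sum>t\<in>\<sigma>1. l t) = 1"
      using d_eq \<open>0 < d\<close> assms(1) s_notin by (simp add: l_def sum_divide_distrib[symmetric])
    ultimately have "\<forall>t\<in>\<sigma>1 - \<sigma>1 \<inter> \<sigma>2. l t = 0"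
      using barycentric_coords_vanish_outside[OF assms(1,3) Int_lower1] by simp
    then have "l t = 0"
      using t by blast
    then show ?thesis
      using assms(4) t \<open>0 < d\<close> by (auto simp: l_def)
  qed
qed

lemma not_overlap_cone:
  assumes "finite \<sigma>1" "finite \<sigma>2" "card \<sigma>1 \<le> Suc D" "\<forall>t\<in>\<sigma>1 \<union> \<sigma>2. t < s"
    and "\<not> overlap D \<sigma>1 \<sigma>2"
  shows "\<not> overlap (Suc D) (insert s \<sigma>1) (insert s \<sigma>2)"
proof -
  have base: "conv_mc D \<sigma>1 \<inter> conv_mc D \<sigma>2 \<subseteq> conv_mc D (\<sigma>1 \<inter> \<sigma>2)"
    using not_overlap_iff_inter_subset assms(1,2,5) by blast
  have "conv_mc (Suc D) (insert s \<sigma>1) \<inter> conv_mc (Suc D) (insert s \<sigma>2)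
      \<subseteq> conv_mc (Suc D) (insert s (\<sigma>1 \<inter> \<sigma>2))"
  proof
    fix y assume y: "y \<in> conv_mc (Suc D) (insert s \<sigma>1) \<inter> conv_mc (Suc D) (insert s \<sigma>2)"
    then obtain c where yc: "y = (\<lambda>i. \<Sum>t\<in>insert s \<sigma>1. c t * moment (Suc D) t i)"
      and c: "\<forall>t\<in>insert s \<sigma>1. 0 \<le> c t" "(\<Sum>t\<in>insert s \<sigma>1. c t) = 1"
      by (auto simp: conv_mc_def)
    then have "\<forall>t\<in>\<sigma>1 - \<sigma>2. c t = 0"
      using cone_coords_vanish_outside[OF assms(1-4) base c yc] y by blast
    then show "y \<in> conv_mc (Suc D) (insert s (\<sigma>1 \<inter> \<sigma>2))"
      unfolding yc
      using conv_mc_if_weights_vanish[of "insert s \<sigma>1" "insert s (\<sigma>1 \<inter> \<sigma>2)" c "Suc D"] c assms(1)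
      by auto
  qed
  then show ?thesis
    using not_overlap_insert_iff assms(1,2) by blast
qed

lemma not_overlap_of_cone:
  assumes "finite \<sigma>1" "finite \<sigma>2" "\<forall>t\<in>\<sigma>1 \<union> \<sigma>2. t < s"
    and "\<not> overlap (Suc D) (insert s \<sigma>1) (insert s \<sigma>2)"
  shows "\<not> overlap D \<sigma>1 \<sigma>2"
proof -
  obtain e where e: "0 < e" "\<forall>t\<in>\<sigma>1 \<union> \<sigma>2. e < s - t"
    using exists_gap_below[of "\<sigma>1 \<union> \<sigma>2" s] assms(1-3) by blast
  have gap: "\<forall>t\<in>\<sigma>1. e \<le> s - t" "\<forall>t\<in>\<sigma>2. e \<le> s - t"
    using e(2) by (auto intro: less_imp_le)
  have cone: "conv_mc (Suc D) (insert s \<sigma>1) \<inter> conv_mc (Suc D) (insert s \<sigma>2)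
      \<subseteq> conv_mc (Suc D) (insert s (\<sigma>1 \<inter> \<sigma>2))"
    using not_overlap_insert_iff assms(1,2,4) by blast
  have "conv_mc D \<sigma>1 \<inter> conv_mc D \<sigma>2 \<subseteq> conv_mc D (\<sigma>1 \<inter> \<sigma>2)"
  proof
    fix x assume x: "x \<in> conv_mc D \<sigma>1 \<inter> conv_mc D \<sigma>2"
    obtain y1 where y1: "y1 \<in> conv_mc (Suc D) (insert s \<sigma>1)" "y1 1 = s - e" "slice_proj D s e y1 = x"
      using slice_proj_lift[OF assms(1) e(1) gap(1)] x by blast
    obtain y2 where y2: "y2 \<in> conv_mc (Suc D) (insert s \<sigma>2)" "y2 1 = s - e" "slice_proj D s e y2 = x"
      using slice_proj_lift[OF assms(2) e(1) gap(2)] x by blast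
    have "y1 = y2"
      using slice_proj_eq_imp_eq[OF y1(1) y2(1), of e s] e(1) y1(2,3) y2(2,3) by simp
    then have "y1 \<in> conv_mc (Suc D) (insert s (\<sigma>1 \<inter> \<sigma>2))"
      using cone y1(1) y2(1) by blast
    moreover have "\<forall>t\<in>\<sigma>1 \<inter> \<sigma>2. t \<le> s"
      using assms(3) by (auto intro: less_imp_le)
    ultimately have "slice_proj D s e y1 \<in> conv_mc D (\<sigma>1 \<inter> \<sigma>2 - {s})"
      using slice_proj_mem_conv_mc[of "\<sigma>1 \<inter> \<sigma>2" s e y1 D] assms(1) e(1) y1(2) by blast
    moreover have "\<sigma>1 \<inter> \<sigma>2 - {s} = \<sigma>1 \<inter> \<sigma>2"
      using assms(3) by auto
    ultimately show "x \<in> conv_mc D (\<sigma>1 \<inter> \<sigma>2)"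
      using y1(3) by simp
  qed
  then show ?thesis
    using not_overlap_iff_inter_subset assms(1,2) by blast
qed

lemma overlap_cone_iff:
  assumes "finite \<sigma>1" "finite \<sigma>2" "card \<sigma>1 \<le> Suc D" "\<forall>t\<in>\<sigma>1 \<union> \<sigma>2. t < s"
  shows "overlap (Suc D) (insert s \<sigma>1) (insert s \<sigma>2) \<longleftrightarrow> overlap D \<sigma>1 \<sigma>2"
  using not_overlap_cone[OF assms] not_overlap_of_cone[OF assms(1,2,4)] by blast

lemma triangulation_link:
  assumes "triangulation (Suc D) (insert s A) T" "finite A" "\<forall>t\<in>A. t < s"
  shows "triangulation D A ((\<lambda>\<tau>. \<tau> - {s}) ` {\<tau>\<in>T. s \<in> \<tau>})"
    (is "triangulation D A ?L")
proof -
  have T: "finite T" "pairwise_nonoverlapping (Suc D) T"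
    "(\<Union>\<tau>\<in>T. conv_mc (Suc D) \<tau>) = conv_mc (Suc D) (insert s A)"
    and simplex: "\<And>\<tau>. \<tau> \<in> T \<Longrightarrow> finite \<tau> \<and> card \<tau> = Suc (Suc D) \<and> \<tau> \<subseteq> insert s A"
    using assms(1) by (auto simp: triangulation_def is_simplex_def)
  have cone: "insert s \<sigma> \<in> T" "s \<notin> \<sigma>" if "\<sigma> \<in> ?L" for \<sigma>
    using that by (auto simp: insert_absorb)
  have simplices: "\<forall>\<sigma>\<in>?L. is_simplex D \<sigma> \<and> \<sigma> \<subseteq> A"
  proof
    fix \<sigma> assume "\<sigma> \<in> ?L"
    then obtain \<tau> where "\<tau> \<in> T" "s \<in> \<tau>" "\<sigma> = \<tau> - {s}"
      by blast
    then show "is_simplex D \<sigma> \<and> \<sigma> \<subseteq> A"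
      using simplex[of \<tau>] by (auto simp: is_simplex_def)
  qed
  have pairwise: "pairwise_nonoverlapping D ?L"
    unfolding pairwise_nonoverlapping_def
  proof (intro ballI impI)
    fix \<sigma>1 \<sigma>2 assume \<sigma>: "\<sigma>1 \<in> ?L" "\<sigma>2 \<in> ?L" "\<sigma>1 \<noteq> \<sigma>2"
    then have "insert s \<sigma>1 \<noteq> insert s \<sigma>2"
      using cone(2) by (metis Diff_insert_absorb)
    then have "\<not> overlap (Suc D) (insert s \<sigma>1) (insert s \<sigma>2)"
      using pairwise_nonoverlappingD[OF T(2) cone(1)[OF \<sigma>(1)] cone(1)[OF \<sigma>(2)]] by blast
    moreover have "finite \<sigma>1" "finite \<sigma>2" "card \<sigma>1 \<le> Suc D" "\<forall>t\<in>\<sigma>1 \<union> \<sigma>2. t < s"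
      using simplices \<sigma>(1,2) assms(3) by (auto simp: is_simplex_def)
    ultimately show "\<not> overlap D \<sigma>1 \<sigma>2"
      using overlap_cone_iff by blast
  qed
  have "conv_mc D A \<subseteq> (\<Union>\<sigma>\<in>?L. conv_mc D \<sigma>)"
  proof
    fix x assume x: "x \<in> conv_mc D A"
    obtain e where e: "0 < e" "\<forall>t\<in>A. e < s - t"
      using exists_gap_below assms(2,3) by blast
    then have "\<forall>t\<in>A. e \<le> s - t"
      by (auto intro: less_imp_le)
    then obtain y where y: "y \<in> conv_mc (Suc D) (insert s A)" "y 1 = s - e" "slice_proj D s e y = x"
      using slice_proj_lift[OF assms(2) e(1)] x by blast
    then obtain \<tau> where \<tau>: "\<tau> \<in> T" "y \<in> conv_mc (Suc D) \<tau>"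
      using T(3) by blast
    \<comment> \<open>the slice \<open>y\<^sub>1 = s - e\<close> misses every cell avoiding s\<close>
    have "s \<in> \<tau>"
    proof (rule ccontr)
      assume "s \<notin> \<tau>"
      have "\<forall>t\<in>\<tau>. t < s - e"
      proof
        fix t assume "t \<in> \<tau>"
        then have "t \<in> A"
          using simplex[OF \<tau>(1)] \<open>s \<notin> \<tau>\<close> by auto
        then show "t < s - e"
          using e(2) by auto
      qed
      then have "y 1 < s - e"
        by (rule conv_mc_first_coord_less[OF \<tau>(2)])
      with y(2) show False
        by simp
    qed
    moreover have "\<forall>t\<in>\<tau>. t \<le> s"
      using simplex[OF \<tau>(1)] assms(3) by (auto intro: less_imp_le)
    ultimately have "slice_proj D s e y \<in> conv_mc D (\<tau> - {s})"
      using slice_proj_mem_conv_mc[of \<tau> s e y D] simplex[OF \<tau>(1)] e(1) \<tau>(2) y(2)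
      by (simp add: insert_absorb)
    then show "x \<in> (\<Union>\<sigma>\<in>?L. conv_mc D \<sigma>)"
      using \<tau>(1) \<open>s \<in> \<tau>\<close> y(3) by blast
  qed
  moreover have "(\<Union>\<sigma>\<in>?L. conv_mc D \<sigma>) \<subseteq> conv_mc D A"
    using simplices conv_mc_mono[OF assms(2)] by blast
  ultimately show ?thesis
    unfolding triangulation_def using T(1) simplices pairwise by auto
qed

lemma pairwise_nonoverlapping_cone:
  assumes "\<forall>\<sigma>\<in>F. is_simplex D \<sigma>" "pairwise_nonoverlapping D F" "\<forall>t\<in>\<Union>F. t < s"
  shows "pairwise_nonoverlapping (Suc D) (insert s ` F)"
  unfolding pairwise_nonoverlapping_def
proof (intro ballI impI)
  fix \<tau>1 \<tau>2 assume "\<tau>1 \<in> insert s ` F" "\<tau>2 \<in> insert s ` F" "\<tau>1 \<noteq> \<tau>2"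
  then obtain \<sigma>1 \<sigma>2 where \<sigma>: "\<sigma>1 \<in> F" "\<sigma>2 \<in> F" "\<tau>1 = insert s \<sigma>1" "\<tau>2 = insert s \<sigma>2"
    "\<sigma>1 \<noteq> \<sigma>2"
    by auto
  then have "\<not> overlap D \<sigma>1 \<sigma>2"
    using pairwise_nonoverlappingD[OF assms(2)] by blast
  moreover have "finite \<sigma>1" "finite \<sigma>2" "card \<sigma>1 \<le> Suc D" "\<forall>t\<in>\<sigma>1 \<union> \<sigma>2. t < s"
    using assms(1,3) \<sigma>(1,2) by (auto simp: is_simplex_def)
  ultimately show "\<not> overlap (Suc D) \<tau>1 \<tau>2"
    using overlap_cone_iff \<sigma>(3,4) by blast
qed

lemma non_extendable_nonempty:
  assumes "non_extendable D F"
  shows "F \<noteq> {}"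
  using assms
  by (auto simp: non_extendable_def triangulation_def pairwise_nonoverlapping_def conv_mc_def)

lemma non_extendable_cone:
  assumes "non_extendable D F" "finite (\<Union>F)" "\<forall>t\<in>\<Union>F. t < s"
  shows "non_extendable (Suc D) (insert s ` F)"
  unfolding non_extendable_def
proof
  assume "\<exists>T. triangulation (Suc D) (\<Union>(insert s ` F)) T \<and> insert s ` F \<subseteq> T"
  moreover have "\<Union>(insert s ` F) = insert s (\<Union>F)"
    using non_extendable_nonempty[OF assms(1)] by auto
  ultimately obtain T where T: "triangulation (Suc D) (insert s (\<Union>F)) T" "insert s ` F \<subseteq> T"
    by auto
  have "F \<subseteq> (\<lambda>\<tau>. \<tau> - {s}) ` {\<tau>\<in>T. s \<in> \<tau>}"
  proof
    fix \<sigma> assume "\<sigma> \<in> F"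
    then have "insert s \<sigma> \<in> T" "s \<notin> \<sigma>"
      using T(2) assms(3) by auto
    then show "\<sigma> \<in> (\<lambda>\<tau>. \<tau> - {s}) ` {\<tau>\<in>T. s \<in> \<tau>}"
      by (intro image_eqI[of _ _ "insert s \<sigma>"]) auto
  qed
  then show False
    using triangulation_link[OF T(1) assms(2,3)] assms(1) unfolding non_extendable_def by blast
qed

theorem proposition4p3:
  fixes D n :: nat and F :: "real set set"
  assumes "D \<ge> 1"
    and "\<forall>\<sigma>\<in>F. is_simplex D \<sigma>"
    and "pairwise_nonoverlapping D F"
    and "finite (\<Union>F)" and "card (\<Union>F) = n"
    and "non_extendable D F"
  shows "\<exists>F' :: real set set. (\<forall>\<sigma>\<in>F'. is_simplex (D + 1) \<sigma>)
            \<and> pairwise_nonoverlapping (D + 1) F'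
            \<and> finite (\<Union>F') \<and> card (\<Union>F') = n + 1
            \<and> non_extendable (D + 1) F'"
proof -
  define s where "s = Max (\<Union>F) + 1"
  have above: "\<forall>t\<in>\<Union>F. t < s"
    using assms(4) Max_ge[of "\<Union>F"] by (fastforce simp: s_def)
  then have "s \<notin> \<Union>F"
    by blast
  have union: "\<Union>(insert s ` F) = insert s (\<Union>F)"
    using non_extendable_nonempty[OF assms(6)] by auto
  show ?thesis
  proof (intro exI conjI)
    show "\<forall>\<sigma>\<in>insert s ` F. is_simplex (D + 1) \<sigma>"
      using assms(2) \<open>s \<notin> \<Union>F\<close> by (auto simp: is_simplex_def)
    show "pairwise_nonoverlapping (D + 1) (insert s ` F)"
      using pairwise_nonoverlapping_cone[OF assms(2,3) above] by simp
    show "finite (\<Union>(insert s ` F))" "card (\<Union>(insert s ` F)) = n + 1"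
      using union assms(4,5) \<open>s \<notin> \<Union>F\<close> by simp_all
    show "non_extendable (D + 1) (insert s ` F)"
      using non_extendable_cone[OF assms(6,4) above] by simp
  qed
qed

end
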